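(* Let $T$ be a tree. If $F$ is a minimal fort of $T$, then $F$ does not contain three distinct vertices $a, b, c$ with $a \sim b$ and $b \sim c$.
   Context: $u \sim v$ means $u$ and $v$ are adjacent. A fort of a graph $G$ is a nonempty set $F\subseteq V(G)$ such that every vertex outside $F$ is adjacent to either zero or at least two vertices of $F$; it is minimal if no proper subset is a fort. *)

theory Defs
  imports Main
begin

definition simple_graph :: "'a set \<Rightarrow> ('a \<Rightarrow> 'a \<Rightarrow> bool) \<Rightarrow> bool" where
  "simple_graph V E \<longleftrightarrow> finite V \<and> (\<forall>u v. E u v \<longrightarrow> u \<in> V \<and> v \<in> V)
     \<and> (\<forall>u v. E u v \<longrightarrow> E v u) \<and> (\<forall>v. \<not> E v v)"

definition is_walk :: "('a \<Rightarrow> 'a \<Rightarrow> bool) \<Rightarrow> 'a list \<Rightarrow> bool" where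
  "is_walk E p \<longleftrightarrow> p \<noteq> [] \<and> (\<forall>i. Suc i < length p \<longrightarrow> E (p ! i) (p ! Suc i))"

definition connected_graph :: "'a set \<Rightarrow> ('a \<Rightarrow> 'a \<Rightarrow> bool) \<Rightarrow> bool" where
  "connected_graph V E \<longleftrightarrow> V \<noteq> {} \<and>
     (\<forall>u\<in>V. \<forall>v\<in>V. \<exists>p. is_walk E p \<and> hd p = u \<and> last p = v)"

definition has_cycle :: "('a \<Rightarrow> 'a \<Rightarrow> bool) \<Rightarrow> bool" where
  "has_cycle E \<longleftrightarrow> (\<exists>p. is_walk E p \<and> distinct p \<and> length p \<ge> 3 \<and> E (last p) (hd p))"

definition is_tree :: "'a set \<Rightarrow> ('a \<Rightarrow> 'a \<Rightarrow> bool) \<Rightarrow> bool" where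
  "is_tree V E \<longleftrightarrow> simple_graph V E \<and> connected_graph V E \<and> \<not> has_cycle E"

definition is_fort :: "'a set \<Rightarrow> ('a \<Rightarrow> 'a \<Rightarrow> bool) \<Rightarrow> 'a set \<Rightarrow> bool" where
  "is_fort V E F \<longleftrightarrow> F \<noteq> {} \<and> F \<subseteq> V \<and>
     (\<forall>v \<in> V - F. card {u \<in> F. E v u} \<noteq> 1)"

definition is_minimal_fort :: "'a set \<Rightarrow> ('a \<Rightarrow> 'a \<Rightarrow> bool) \<Rightarrow> 'a set \<Rightarrow> bool" where
  "is_minimal_fort V E F \<longleftrightarrow> is_fort V E F \<and> (\<forall>F'. F' \<subset> F \<longrightarrow> \<not> is_fort V E F')"

end

theory Submission
  imports Defs
begin

text \<open>
  Suppose a, b, c \<in> F with a \<sim> b \<sim> c. Let X be the set of vertices reachable from a or c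
  without passing through b. Since T has no cycles, the only neighbours of b in X are a and c,
  and the only neighbour of X outside X is b. Hence every vertex of X keeps all its F-neighbours
  in F \<inter> X, vertices outside X \<union> {b} see no vertex of F \<inter> X, and b sees the two vertices a, c.
  So F \<inter> X is a fort, and it is a proper subset of F because it misses b.
\<close>

lemma is_walk_singleton [simp]: "is_walk E [x]"
  by (simp add: is_walk_def)

lemma is_walk_Cons_Cons [simp]: "is_walk E (x # y # r) \<longleftrightarrow> E x y \<and> is_walk E (y # r)"
  unfolding is_walk_def by (auto simp: nth_Cons split: nat.splits)

lemma is_walk_ConsD: "is_walk E (x # r) \<Longrightarrow> r \<noteq> [] \<Longrightarrow> is_walk E r"
  by (cases r) auto

lemma is_walk_snoc: "is_walk E p \<Longrightarrow> E (last p) u \<Longrightarrow> is_walk E (p @ [u])"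
proof (induction p rule: induct_list012)
  case (3 x y r)
  then show ?case by simp
qed (auto simp: is_walk_def)

lemma is_walk_appendD2: "is_walk E (ys @ zs) \<Longrightarrow> zs \<noteq> [] \<Longrightarrow> is_walk E zs"
  by (induction ys) (auto dest: is_walk_ConsD)

lemma is_walk_distinct:
  assumes "is_walk E p"
  obtains q where "is_walk E q" "distinct q" "hd q = hd p" "last q = last p" "set q \<subseteq> set p"
  using assms
proof (induction p arbitrary: thesis)
  case Nil
  then show ?case by (simp add: is_walk_def)
next
  case (Cons x r)
  show ?case
  proof (cases r)
    case Nil
    then show ?thesis using Cons.prems(1)[of "[x]"] by simp
  next
    case (Cons y r')
    with Cons.prems(2) have "E x y" and "is_walk E r" by auto
    then obtain q where q: "is_walk E q" "distinct q" "hd q = y" "last q = last r" "set q \<subseteq> set r"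
      using Cons.IH \<open>r = y # r'\<close> by auto
    show ?thesis
    proof (cases "x \<in> set q")
      case False
      have "q \<noteq> []" using q(1) by (auto simp: is_walk_def)
      then obtain q' where "q = y # q'" using q(3) by (cases q) auto
      then show ?thesis
        using Cons.prems(1)[of "x # q"] q \<open>E x y\<close> False \<open>r = y # r'\<close> by auto
    next
      case True
      then obtain ys zs where qs: "q = ys @ x # zs" by (meson split_list)
      have "is_walk E (x # zs)" using is_walk_appendD2 q(1) qs by blast
      moreover have "last (x # zs) = last (x # r)"
        using q(4) qs \<open>r = y # r'\<close> by (cases zs) auto
      ultimately show ?thesis
        using Cons.prems(1)[of "x # zs"] q(2,5) qs by auto
    qed
  qed
qed

definition reachable_avoiding :: "('a \<Rightarrow> 'a \<Rightarrow> bool) \<Rightarrow> 'a set \<Rightarrow> 'a \<Rightarrow> 'a set" where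
  "reachable_avoiding E S b = {v. \<exists>p. is_walk E p \<and> hd p \<in> S \<and> last p = v \<and> b \<notin> set p}"

lemma reachable_avoiding_start: "s \<in> S \<Longrightarrow> s \<noteq> b \<Longrightarrow> s \<in> reachable_avoiding E S b"
  unfolding reachable_avoiding_def by (intro CollectI exI[of _ "[s]"]) auto

lemma avoided_not_reachable_avoiding: "b \<notin> reachable_avoiding E S b"
  unfolding reachable_avoiding_def by (auto simp: is_walk_def)

lemma reachable_avoiding_step:
  assumes "v \<in> reachable_avoiding E S b" "E v u" "u \<noteq> b"
  shows "u \<in> reachable_avoiding E S b"
proof -
  obtain p where p: "is_walk E p" "hd p \<in> S" "last p = v" "b \<notin> set p"
    using assms(1) unfolding reachable_avoiding_def by blast
  have "p \<noteq> []" using p(1) by (simp add: is_walk_def)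
  then have "is_walk E (p @ [u]) \<and> hd (p @ [u]) \<in> S \<and> last (p @ [u]) = u \<and> b \<notin> set (p @ [u])"
    using is_walk_snoc p assms by auto
  then show ?thesis unfolding reachable_avoiding_def by blast
qed

text \<open>A walk from s to v avoiding b, closed up by the edges v b and b s, would be a cycle.\<close>
lemma acyclic_reachable_avoiding_adjacent:
  assumes "\<not> has_cycle E" "\<forall>s\<in>S. E b s"
    and "v \<in> reachable_avoiding E S b" "E v b"
  shows "v \<in> S"
proof (rule ccontr)
  assume "v \<notin> S"
  obtain p where p: "is_walk E p" "hd p \<in> S" "last p = v" "b \<notin> set p"
    using assms(3) unfolding reachable_avoiding_def by blast
  obtain q where q: "is_walk E q" "distinct q" "hd q = hd p" "last q = v" "set q \<subseteq> set p"
    using is_walk_distinct[OF p(1)] p(3) by metis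
  have "q \<noteq> []" using q(1) by (simp add: is_walk_def)
  have "hd q \<noteq> last q" using q p \<open>v \<notin> S\<close> by auto
  then have "length (q @ [b]) \<ge> 3"
    using \<open>q \<noteq> []\<close> by (cases q; cases "tl q") auto
  moreover have "is_walk E (q @ [b])" using is_walk_snoc[OF q(1)] q(4) assms(4) by simp
  moreover have "distinct (q @ [b])" using q(2,5) p(4) by auto
  moreover have "E (last (q @ [b])) (hd (q @ [b]))"
    using \<open>q \<noteq> []\<close> q(3) p(2) assms(2) by auto
  ultimately have "has_cycle E" unfolding has_cycle_def by blast
  with assms(1) show False by simp
qed

lemma is_fort_Int:
  assumes "simple_graph V E" "is_fort V E F"
    and "F \<inter> X \<noteq> {}" "card {u \<in> F \<inter> X. E b u} \<noteq> 1"
    and closed: "\<And>v u. v \<in> X \<Longrightarrow> E v u \<Longrightarrow> u \<in> X \<or> u = b"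
    and b_nbrs: "\<And>v. v \<in> X \<Longrightarrow> E v b \<Longrightarrow> v \<in> F"
  shows "is_fort V E (F \<inter> X)"
  unfolding is_fort_def
proof (intro conjI ballI)
  show "F \<inter> X \<noteq> {}" "F \<inter> X \<subseteq> V" using assms(2,3) by (auto simp: is_fort_def)
next
  have sym: "E u v \<Longrightarrow> E v u" for u v using assms(1) by (simp add: simple_graph_def)
  fix v assume v: "v \<in> V - F \<inter> X"
  consider "v \<in> X" | "v = b" | "v \<notin> X" "v \<noteq> b" by blast
  then show "card {u \<in> F \<inter> X. E v u} \<noteq> 1"
  proof cases
    case 1
    then have "v \<notin> F" using v by blast
    then have "{u \<in> F \<inter> X. E v u} = {u \<in> F. E v u}"
      using closed[OF 1] b_nbrs[OF 1] by blast
    then show ?thesis using assms(2) v \<open>v \<notin> F\<close> by (simp add: is_fort_def)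
  next
    case 2
    then show ?thesis using assms(4) by simp
  next
    case 3
    then have "{u \<in> F \<inter> X. E v u} = {}" using closed sym by blast
    then show ?thesis by (simp only: card.empty)
  qed
qed

theorem mainTheorem5:
  fixes V :: "'a set" and E :: "'a \<Rightarrow> 'a \<Rightarrow> bool" and F :: "'a set"
  assumes "is_tree V E"
    and "is_minimal_fort V E F"
  shows "\<not> (\<exists>a b c. a \<in> F \<and> b \<in> F \<and> c \<in> F \<and> a \<noteq> b \<and> b \<noteq> c \<and> a \<noteq> c
                   \<and> E a b \<and> E b c)"
proof
  assume "\<exists>a b c. a \<in> F \<and> b \<in> F \<and> c \<in> F \<and> a \<noteq> b \<and> b \<noteq> c \<and> a \<noteq> c \<and> E a b \<and> E b c"
  then obtain a b c where abc: "a \<in> F" "b \<in> F" "c \<in> F" "a \<noteq> b" "b \<noteq> c" "a \<noteq> c" "E a b" "E b c"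
    by blast
  have graph: "simple_graph V E" and acyclic: "\<not> has_cycle E"
    using assms(1) by (auto simp: is_tree_def)
  have "E b a" using graph abc(7) by (simp add: simple_graph_def)
  define X where "X = reachable_avoiding E {a, c} b"
  have "a \<in> X" "c \<in> X"
    using abc reachable_avoiding_start[of _ "{a, c}" b E] unfolding X_def by auto
  have "b \<notin> X" unfolding X_def by (rule avoided_not_reachable_avoiding)
  have "is_fort V E F" using assms(2) by (simp add: is_minimal_fort_def)
  then have "is_fort V E (F \<inter> X)"
  proof (rule is_fort_Int[OF graph])
    show "F \<inter> X \<noteq> {}" using abc(1) \<open>a \<in> X\<close> by blast
    have "{a, c} \<subseteq> {u \<in> F \<inter> X. E b u}"
      using abc \<open>E b a\<close> \<open>a \<in> X\<close> \<open>c \<in> X\<close> by auto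
    then show "card {u \<in> F \<inter> X. E b u} \<noteq> 1"
      using abc(6) by (metis card_1_singletonE insert_subset singletonD)
    show "u \<in> X \<or> u = b" if "v \<in> X" "E v u" for v u
      using reachable_avoiding_step that unfolding X_def by metis
    show "v \<in> F" if "v \<in> X" "E v b" for v
      using acyclic_reachable_avoiding_adjacent[OF acyclic _ that[unfolded X_def]]
        \<open>E b a\<close> abc by blast
  qed
  moreover have "F \<inter> X \<subset> F" using abc(2) \<open>b \<notin> X\<close> by blast
  ultimately show False using assms(2) by (simp add: is_minimal_fort_def)
qed

end
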